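(* For every game $g\in\mathcal{S}_1\cup\mathcal{S}_2$ and every game $h$ obtained from $g$ by a single move of Right, the game returned by ASF applied to $h$ belongs to $\mathcal{S}_0$.
   Context: Linear clobber: Left owns black stones $\mathtt{x}$, Right owns white stones $\mathtt{o}$, on a path of cells each empty or holding a stone. A move: a player chooses one of their stones adjacent (consecutive on the path) to an opponent stone, removes the opponent stone and moves their own stone into that cell, emptying its original cell. Players alternate; whoever cannot move loses. A part is a maximal block of consecutive non-empty cells, written as a word over $\{\mathtt{o},\mathtt{x}\}$ (concatenation, exponents for repetition); a part and its reversal are identified; a game is the disjoint sum (multiset) of its parts, and $0$ denotes the game with no parts. For a part $p$, $-p$ swaps all colors. Notation: $\mathtt{a}(2n)=(\mathtt{ox})^n$; $\mathtt{o}(2t+1)=\mathtt{o}(\mathtt{xo})^t$; $\mathtt{oo}(2t)=\mathtt{oo}(\mathtt{xo})^{t-1}$; $\mathtt{oo}(2t+1)=\mathtt{o}(\mathtt{ox})^{t}$; $\mathtt{oo}(2t+1)\mathtt{oo}=\mathtt{oo}(\mathtt{xo})^{t-1}\mathtt{o}$. Algorithm ASF: repeatedly apply the first applicable rule in the order $\alpha,-\alpha,\beta,-\beta,\gamma,-\gamma,\delta,-\delta,\varepsilon,-\varepsilon,\zeta,-\zeta,\eta,-\eta$ until none applies; each rule replaces one part (up to reversal) by the listed parts: $\alpha$: each of $\mathtt{o},\mathtt{oo},\mathtt{ooo},\mathtt{ooxx},\mathtt{oxoxox}$ by nothing; $\beta$: if parts $p$ and $-p$ are both present, delete both; $\gamma$: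 each of $\mathtt{oxo},\mathtt{ooxox},\mathtt{ooxoxoo},\mathtt{xxoxoxx}$ by $\mathtt{ox}$; $\delta$: $\mathtt{oxoxoxoxo}$ by $\mathtt{ooxo}$; $\varepsilon$: each of $\mathtt{ooxoxx},\mathtt{oxoxoxoxoxox}$ by $\mathtt{oxox}+\mathtt{ox}$; $\zeta$: $\mathtt{ooxoo}$ by $\mathtt{oox}$; $\eta$: $\mathtt{ooxo}$ by $\mathtt{xxo}+\mathtt{ox}$. The rule $-\rho$ is $\rho$ with every part on both sides replaced by its negative. A game is in standard form if no rule applies to it. Sets of parts: $\mathcal{O}'=\{\mathtt{o}(2t+1): t\ge 2, t\ne 4\}$ ($\mathtt{o5},\mathtt{o7},\mathtt{o11},\dots$); $o\mathcal{O}'=\{\mathtt{oo}(2t): t\ge 5\}$; $o\mathcal{O}o'=\{\mathtt{oox}\}\cup\{\mathtt{oo}(2t+1)\mathtt{oo}: t\ge 4\}$; $\mathcal{I}=\{\mathtt{a2},\mathtt{a4},\mathtt{oo6}\}$; $\mathcal{A}'=\{\mathtt{a}(2n): n\ge 4, n\ne 6\}$; $o\mathcal{A}'=\{\mathtt{oo}(2t+1): t\ge 3\}$; $K=\mathcal{O}'\cup o\mathcal{O}'\cup o\mathcal{O}o'\cup\mathcal{I}\cup\{\mathtt{xxo}\}\cup\{\mathtt{oo8}\}\cup\mathcal{A}'\cup o\mathcal{A}'$. For a game $g$ in standard form with all parts in $K$, its count vector is $(a,b,c,d,e,f,y,z)$ where these are the numbers of parts of $g$ (with multiplicity) lying in $\mathcal{O}'$,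 $o\mathcal{O}'$, $o\mathcal{O}o'$, $\mathcal{I}$, $\{\mathtt{xxo}\}$, $\{\mathtt{oo8}\}$, $\mathcal{A}'$, $o\mathcal{A}'$ respectively. Let $Q=\{\mathtt{o5}+\mathtt{a2},\ \mathtt{o7}+\mathtt{a4},\ \mathtt{o15}+\mathtt{a4}+\mathtt{a2}\}$. Consider games $g$ in standard form with at least one part and all parts in $K$. Then: $g\in\mathcal{S}_0$ iff $(y,z)=(1,0)$ and $a\ge c$, or $(y,z)=(0,0)$ and $a\ge c$, or $(y,z)=(0,1)$ and $a\ge c+1$; $g\in\mathcal{S}_1$ iff $(y,z)=(0,0)$, $a\ge c+1$ and $g\notin Q$; $g\in\mathcal{S}_2$ iff $y=z=a=b=c=0$, $e\ge 1$, and either $d=0$ or $d+e\ge 3$. *)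

theory Defs
  imports Main "HOL-Library.Multiset"
begin

text \<open>B = black stone x (Left), W = white stone o (Right).\<close>
datatype stone = B | W

type_synonym part = "stone list"
type_synonym game = "part multiset"

text \<open>Word notation: wd ''oxo'' is the part o x o.\<close>
definition wd :: "string \<Rightarrow> part" where
  "wd s = map (\<lambda>c. if c = CHR ''x'' then B else W) s"

fun swap :: "stone \<Rightarrow> stone" where
  "swap B = W" | "swap W = B"

definition negp :: "part \<Rightarrow> part" where
  "negp p = map swap p"

definition same_part :: "part \<Rightarrow> part \<Rightarrow> bool" where
  "same_part p q \<longleftrightarrow> p = q \<or> p = rev q"

definition in_up :: "part \<Rightarrow> part set \<Rightarrow> bool" where
  "in_up p A \<longleftrightarrow> (\<exists>q\<in>A. same_part p q)"

definition right_move :: "game \<Rightarrow> game \<Rightarrow> bool" where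
  "right_move g h \<longleftrightarrow> (\<exists>p\<in>#g. \<exists>u v.
     (p = u @ [B, W] @ v \<and> h = g - {#p#} + filter_mset (\<lambda>q. q \<noteq> []) {#u @ [W], v#}) \<or>
     (p = u @ [W, B] @ v \<and> h = g - {#p#} + filter_mset (\<lambda>q. q \<noteq> []) {#u, W # v#}))"

datatype rule = Repl "(part \<times> part list) list" | Cancel

fun neg_rule :: "rule \<Rightarrow> rule" where
  "neg_rule (Repl rs) = Repl (map (\<lambda>(l, r). (negp l, map negp r)) rs)"
| "neg_rule Cancel = Cancel"

fun rule_res :: "rule \<Rightarrow> game \<Rightarrow> game \<Rightarrow> bool" where
  "rule_res (Repl rs) g g' \<longleftrightarrow> (\<exists>(l, r)\<in>set rs. \<exists>p\<in>#g. same_part p l \<and> g' = g - {#p#} + mset r)"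
| "rule_res Cancel g g' \<longleftrightarrow> (\<exists>p\<in>#g. \<exists>q\<in>#(g - {#p#}). same_part q (negp p) \<and> g' = g - {#p, q#})"

definition applicable :: "rule \<Rightarrow> game \<Rightarrow> bool" where
  "applicable \<rho> g \<longleftrightarrow> (\<exists>g'. rule_res \<rho> g g')"

definition rule_alpha :: rule where
  "rule_alpha = Repl [(wd ''o'', []), (wd ''oo'', []), (wd ''ooo'', []), (wd ''ooxx'', []), (wd ''oxoxox'', [])]"
definition rule_gamma :: rule where
  "rule_gamma = Repl [(wd ''oxo'', [wd ''ox'']), (wd ''ooxox'', [wd ''ox'']),
                      (wd ''ooxoxoo'', [wd ''ox'']), (wd ''xxoxoxx'', [wd ''ox''])]"
definition rule_delta :: rule where
  "rule_delta = Repl [(wd ''oxoxoxoxo'', [wd ''ooxo''])]"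
definition rule_eps :: rule where
  "rule_eps = Repl [(wd ''ooxoxx'', [wd ''oxox'', wd ''ox'']), (wd ''oxoxoxoxoxox'', [wd ''oxox'', wd ''ox''])]"
definition rule_zeta :: rule where
  "rule_zeta = Repl [(wd ''ooxoo'', [wd ''oox''])]"
definition rule_eta :: rule where
  "rule_eta = Repl [(wd ''ooxo'', [wd ''xxo'', wd ''ox''])]"

text \<open>Rules in priority order alpha, -alpha, beta, -beta, ..., eta, -eta.\<close>
definition asf_rules :: "rule list" where
  "asf_rules = [rule_alpha, neg_rule rule_alpha, Cancel, neg_rule Cancel,
     rule_gamma, neg_rule rule_gamma, rule_delta, neg_rule rule_delta,
     rule_eps, neg_rule rule_eps, rule_zeta, neg_rule rule_zeta,
     rule_eta, neg_rule rule_eta]"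

definition asf_step :: "game \<Rightarrow> game \<Rightarrow> bool" where
  "asf_step g g' \<longleftrightarrow> (\<exists>i < length asf_rules. rule_res (asf_rules ! i) g g' \<and>
                        (\<forall>j < i. \<not> applicable (asf_rules ! j) g))"

definition standard_form :: "game \<Rightarrow> bool" where
  "standard_form g \<longleftrightarrow> (\<forall>\<rho>\<in>set asf_rules. \<not> applicable \<rho> g)"

definition ASF :: "game \<Rightarrow> game \<Rightarrow> bool" where
  "ASF h g' \<longleftrightarrow> asf_step\<^sup>*\<^sup>* h g' \<and> standard_form g'"

definition a_part :: "nat \<Rightarrow> part" where  \<comment> \<open>a(2n) = (ox)^n\<close>
  "a_part n = concat (replicate n [W, B])"
definition o_odd :: "nat \<Rightarrow> part" where  \<comment> \<open>o(2t+1) = o(xo)^t\<close>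
  "o_odd t = W # concat (replicate t [B, W])"
definition oo_even :: "nat \<Rightarrow> part" where  \<comment> \<open>oo(2t) = oo(xo)^(t-1)\<close>
  "oo_even t = [W, W] @ concat (replicate (t - 1) [B, W])"
definition oo_odd :: "nat \<Rightarrow> part" where  \<comment> \<open>oo(2t+1) = o(ox)^t\<close>
  "oo_odd t = W # concat (replicate t [W, B])"
definition oo_odd_oo :: "nat \<Rightarrow> part" where  \<comment> \<open>oo(2t+1)oo = oo(xo)^(t-1)o\<close>
  "oo_odd_oo t = [W, W] @ concat (replicate (t - 1) [B, W]) @ [W]"

definition setO :: "part set" where "setO = {o_odd t | t. t \<ge> 2 \<and> t \<noteq> 4}"
definition setoO :: "part set" where "setoO = {oo_even t | t. t \<ge> 5}"
definition setoOo :: "part set" where "setoOo = {wd ''oox''} \<union> {oo_odd_oo t | t. t \<ge> 4}"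
definition setI :: "part set" where "setI = {a_part 1, a_part 2, oo_even 3}"
definition setX :: "part set" where "setX = {wd ''xxo''}"
definition setF :: "part set" where "setF = {oo_even 4}"
definition setA :: "part set" where "setA = {a_part n | n. n \<ge> 4 \<and> n \<noteq> 6}"
definition setoA :: "part set" where "setoA = {oo_odd t | t. t \<ge> 3}"

definition setK :: "part set" where
  "setK = setO \<union> setoO \<union> setoOo \<union> setI \<union> setX \<union> setF \<union> setA \<union> setoA"

definition cnt :: "part set \<Rightarrow> game \<Rightarrow> nat" where
  "cnt A g = size (filter_mset (\<lambda>p. in_up p A) g)"

definition game_is :: "game \<Rightarrow> part list \<Rightarrow> bool" where
  "game_is g L \<longleftrightarrow> (\<exists>ps. list_all2 same_part ps L \<and> g = mset ps)"

definition inQ :: "game \<Rightarrow> bool" where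
  "inQ g \<longleftrightarrow> game_is g [o_odd 2, a_part 1] \<or> game_is g [o_odd 3, a_part 2]
            \<or> game_is g [o_odd 7, a_part 2, a_part 1]"

definition dom_K :: "game \<Rightarrow> bool" where
  "dom_K g \<longleftrightarrow> standard_form g \<and> (\<forall>p\<in>#g. in_up p setK)"

definition S0 :: "game set" where
  "S0 = {g. dom_K g \<and>
     ((cnt setA g = 1 \<and> cnt setoA g = 0 \<and> cnt setO g \<ge> cnt setoOo g) \<or>
      (cnt setA g = 0 \<and> cnt setoA g = 0 \<and> cnt setO g \<ge> cnt setoOo g) \<or>
      (cnt setA g = 0 \<and> cnt setoA g = 1 \<and> cnt setO g \<ge> cnt setoOo g + 1))}"

definition S1 :: "game set" where
  "S1 = {g. dom_K g \<and> g \<noteq> {#} \<and> cnt setA g = 0 \<and> cnt setoA g = 0 \<and>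
            cnt setO g \<ge> cnt setoOo g + 1 \<and> \<not> inQ g}"

definition S2 :: "game set" where
  "S2 = {g. dom_K g \<and> g \<noteq> {#} \<and> cnt setA g = 0 \<and> cnt setoA g = 0 \<and> cnt setO g = 0 \<and>
            cnt setoO g = 0 \<and> cnt setoOo g = 0 \<and> cnt setX g \<ge> 1 \<and>
            (cnt setI g = 0 \<or> cnt setI g + cnt setX g \<ge> 3)}"

end

theory Submission
  imports Defs
begin

text \<open>
  Call a part admissible if, up to reversal, it is \<open>x\<close>, \<open>xxo\<close>, or an alternating word starting
  with \<open>o\<close>, possibly with one extra \<open>o\<close> glued to one or both of its ends. The proof tracks the
  invariant: all parts are admissible, \<open>y + z \<le> 1\<close>, and the long \<open>oOo\<close>-parts, the \<open>oox\<close>-parts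
  not matched by \<open>xxo\<close>-parts and the \<open>oA\<close>-parts together are at most as many as the \<open>O\<close>-parts.
  Right's move splits one part of a game in \<open>S\<^sub>1 \<union> S\<^sub>2\<close> into two admissible pieces, at most one
  of which counts against the invariant, and none if an \<open>O\<close>-part is destroyed; in \<open>S\<^sub>2\<close> there is
  no \<open>O\<close>-part, but the \<open>oox\<close> the move may create is matched by an \<open>xxo\<close>. Every ASF rule that
  can fire strictly decreases the sum of the squared part lengths and preserves the invariant, and
  in standard form (no \<open>ooxoo\<close> by \<open>\<zeta>\<close>, no \<open>oox\<close> beside an \<open>xxo\<close> by \<open>\<beta>\<close>) the invariant is the
  condition defining \<open>S\<^sub>0\<close>.
\<close>

section \<open>Alternating words\<close>

fun alt :: "stone \<Rightarrow> nat \<Rightarrow> part" where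
  "alt s 0 = []"
| "alt s (Suc n) = s # alt (swap s) n"

lemma alt_numeral [simp]: "alt s (numeral k) = s # alt (swap s) (pred_numeral k)"
  by (simp add: numeral_eq_Suc)

lemma swap_swap [simp]: "swap (swap s) = s"
  by (cases s) auto

lemma length_alt [simp]: "length (alt s n) = n"
  by (induction n arbitrary: s) auto

lemma alt_eq_Nil_iff [simp]: "alt s n = [] \<longleftrightarrow> n = 0"
  by (cases n) auto

lemma alt_add: "alt s (m + n) = alt s m @ alt (if even m then s else swap s) n"
  by (induction m arbitrary: s) auto

lemma alt_Suc_snoc: "alt s (Suc n) = alt s n @ [if even n then s else swap s]"
  using alt_add[of s n 1] by simp

lemma rev_alt: "rev (alt s n) = alt (if even n then swap s else s) n"
proof (induction n arbitrary: s)
  case 0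
  then show ?case by simp
next
  case (Suc n)
  have "rev (alt s (Suc n)) = alt (if even n then s else swap s) n @ [s]"
    using Suc by simp
  also have "\<dots> = alt (if even (Suc n) then swap s else s) (Suc n)"
    by (cases "even n") (simp_all add: alt_Suc_snoc del: alt.simps(2))
  finally show ?case .
qed

lemma rev_alt_odd: "odd n \<Longrightarrow> rev (alt s n) = alt s n"
  by (simp add: rev_alt)

lemma rev_alt_even: "even n \<Longrightarrow> rev (alt s n) = alt (swap s) n"
  by (simp add: rev_alt)

lemma hd_alt: "0 < n \<Longrightarrow> hd (alt s n) = s"
  by (cases n) auto

lemma last_alt: "0 < n \<Longrightarrow> last (alt s n) = (if even n then swap s else s)"
  by (cases n) (simp_all add: alt_Suc_snoc del: alt.simps(2))

lemma alt_split:
  "alt s n = u @ [a, b] @ v \<Longrightarrow>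
     length u + 2 \<le> n \<and> a = (if even (length u) then s else swap s) \<and> b = swap a
     \<and> u = alt s (length u) \<and> v = alt a (n - length u - 2)"
proof (induction u arbitrary: s n)
  case Nil
  then obtain m where "n = Suc (Suc m)"
    by (cases n; cases "n - 1") auto
  with Nil show ?case by auto
next
  case (Cons c u)
  then obtain m where "n = Suc m"
    by (cases n) auto
  with Cons.prems Cons.IH[of "swap s" m] show ?case by auto
qed

lemma negp_alt: "negp (alt s n) = alt (swap s) n"
  by (induction n arbitrary: s) (auto simp: negp_def)

lemma concat_replicate_alt: "concat (replicate t [s, swap s]) = alt s (2 * t)"
  by (induction t) auto

lemma a_part_alt: "a_part n = alt W (2 * n)"
  using concat_replicate_alt[of n W] by (simp add: a_part_def)

lemma o_odd_alt: "o_odd t = alt W (2 * t + 1)"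
  using concat_replicate_alt[of t B] by (simp add: o_odd_def)

lemma oo_even_alt: "0 < t \<Longrightarrow> oo_even t = W # alt W (2 * t - 1)"
  using concat_replicate_alt[of "t - 1" B]
  by (cases t) (simp_all add: oo_even_def)

lemma oo_odd_alt: "oo_odd t = W # alt W (2 * t)"
  using concat_replicate_alt[of t W] by (simp add: oo_odd_def)

lemma oo_odd_oo_alt: "0 < t \<Longrightarrow> oo_odd_oo t = W # alt W (2 * t - 1) @ [W]"
  using concat_replicate_alt[of "t - 1" B]
  by (cases t) (simp_all add: oo_odd_oo_def)

lemma setO_eq: "setO = {alt W n | n. odd n \<and> 5 \<le> n \<and> n \<noteq> 9}"
  unfolding setO_def o_odd_alt by (auto elim!: oddE simp del: alt.simps(2))

lemma setA_eq: "setA = {alt W n | n. even n \<and> 8 \<le> n \<and> n \<noteq> 12}"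
  unfolding setA_def a_part_alt by (auto elim!: evenE)

lemma setoA_eq: "setoA = {W # alt W n | n. even n \<and> 6 \<le> n}"
  unfolding setoA_def oo_odd_alt by (auto elim!: evenE)

lemma setoO_eq: "setoO = {W # alt W n | n. odd n \<and> 9 \<le> n}"
proof -
  have shift: "W # alt W (Suc (2 * t)) = oo_even (Suc t)" for t
    by (simp add: oo_even_alt del: alt.simps(2))
  show ?thesis
    unfolding setoO_def
    by (auto simp: oo_even_alt elim!: oddE simp del: alt.simps(2))
      (use shift in \<open>force simp del: alt.simps(2)\<close>)
qed

lemma setI_eq: "setI = {[W, B], [W, B, W, B], W # alt W 5}"
  by (simp add: setI_def a_part_def oo_even_def numeral_eq_Suc)

lemma setF_eq: "setF = {W # alt W 7}"
  by (simp add: setF_def oo_even_def numeral_eq_Suc)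

lemma setX_eq: "setX = {[B, B, W]}"
  by (simp add: setX_def wd_def)

section \<open>Parts up to reversal and their counts\<close>

lemma same_part_refl [simp]: "same_part p p"
  by (simp add: same_part_def)

lemma same_part_sym: "same_part p q \<Longrightarrow> same_part q p"
  by (auto simp: same_part_def)

lemma same_part_trans: "same_part p q \<Longrightarrow> same_part q r \<Longrightarrow> same_part p r"
  by (auto simp: same_part_def)

lemma same_part_rev_iff [simp]:
  "same_part (rev p) q \<longleftrightarrow> same_part p q" "same_part p (rev q) \<longleftrightarrow> same_part p q"
  by (auto simp: same_part_def)

lemma same_part_length: "same_part p q \<Longrightarrow> length p = length q"
  by (auto simp: same_part_def)

lemma negp_rev: "negp (rev p) = rev (negp p)"
  by (simp add: negp_def rev_map)

lemma same_part_negp: "same_part p q \<Longrightarrow> same_part (negp p) (negp q)"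
  by (auto simp: same_part_def negp_rev)

lemma negp_negp [simp]: "negp (negp p) = p"
  by (simp add: negp_def map_idI)

lemma same_part_negp_sym: "same_part q (negp p) \<Longrightarrow> same_part p (negp q)"
  using same_part_negp[of q "negp p"] by (simp add: same_part_sym)

lemma in_up_same_part: "same_part p q \<Longrightarrow> in_up p A \<longleftrightarrow> in_up q A"
  unfolding in_up_def by (meson same_part_sym same_part_trans)

lemma in_up_rev [simp]: "in_up (rev p) A \<longleftrightarrow> in_up p A"
  by (simp add: in_up_def)

lemma in_upI: "q \<in> A \<Longrightarrow> same_part p q \<Longrightarrow> in_up p A"
  by (auto simp: in_up_def)

lemma in_up_empty [simp]: "\<not> in_up p {}"
  by (simp add: in_up_def)

lemma in_up_insert: "in_up p (insert q A) \<longleftrightarrow> same_part p q \<or> in_up p A"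
  by (auto simp: in_up_def)

definition ind :: "part set \<Rightarrow> part \<Rightarrow> nat" where
  "ind A p = (if in_up p A then 1 else 0)"

lemma ind_le_1: "ind A p \<le> 1"
  by (simp add: ind_def)

lemma ind_same_part: "same_part p q \<Longrightarrow> ind A p = ind A q"
  by (simp add: ind_def in_up_same_part)

lemma ind_rev [simp]: "ind A (rev p) = ind A p"
  by (simp add: ind_def)

lemma cnt_empty [simp]: "cnt A {#} = 0"
  by (simp add: cnt_def)

lemma cnt_union [simp]: "cnt A (M + N) = cnt A M + cnt A N"
  by (simp add: cnt_def)

lemma cnt_add_mset [simp]: "cnt A (add_mset p M) = ind A p + cnt A M"
  by (simp add: cnt_def ind_def)

lemma cnt_remove: "p \<in># M \<Longrightarrow> cnt A M = cnt A (M - {#p#}) + ind A p"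
  by (metis add.commute cnt_add_mset insert_DiffM)

lemma cnt_mset: "cnt A (mset r) = sum_list (map (ind A) r)"
  by (induction r) auto

lemma cnt_eq_0D: "cnt A M = 0 \<Longrightarrow> p \<in># M \<Longrightarrow> \<not> in_up p A"
  using cnt_remove[of p M A] by (auto simp: ind_def)

lemma cnt_gt_0_ex: "0 < cnt A M \<Longrightarrow> \<exists>p\<in>#M. in_up p A"
  by (induction M) (auto simp: ind_def split: if_splits)

lemma cnt_split: "(\<And>p. p \<in># M \<Longrightarrow> ind A p = ind A1 p + ind A2 p) \<Longrightarrow> cnt A M = cnt A1 M + cnt A2 M"
  by (induction M) auto

section \<open>Tracked classes of parts and admissible parts\<close>

text \<open>\<open>ooxoo\<close> is counted with \<open>oox\<close> because rule \<open>\<zeta>\<close> turns it into \<open>oox\<close>.\<close>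

definition setoox :: "part set" where
  "setoox = {[W, W, B], [W, W, B, W, W]}"

definition setoOo_long :: "part set" where
  "setoOo_long = {W # alt W n @ [W] | n. odd n \<and> 7 \<le> n}"

lemma setoOo_eq: "setoOo = insert [W, W, B] setoOo_long"
proof -
  have shift: "W # alt W (Suc (2 * t)) @ [W] = oo_odd_oo (Suc t)" for t
    by (simp add: oo_odd_oo_alt del: alt.simps(2))
  show ?thesis
    unfolding setoOo_def setoOo_long_def
    by (auto simp: oo_odd_oo_alt wd_def elim!: oddE simp del: alt.simps(2))
      (use shift in \<open>force simp del: alt.simps(2)\<close>)
qed

lemma in_up_setO_iff:
  "in_up q setO \<longleftrightarrow> q = alt W (length q) \<and> odd (length q) \<and> 5 \<le> length q \<and> length q \<noteq> 9"
  by (auto simp: in_up_def setO_eq same_part_def rev_alt_odd)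

lemma in_up_setA: "in_up q setA \<Longrightarrow> even (length q) \<and> 8 \<le> length q \<and> hd q \<noteq> last q"
  by (auto simp: in_up_def setA_eq same_part_def hd_rev last_rev hd_alt last_alt)

lemma in_up_setoA: "in_up q setoA \<Longrightarrow> odd (length q) \<and> 7 \<le> length q \<and> hd q \<noteq> last q"
  by (auto simp: in_up_def setoA_eq same_part_def hd_rev last_rev last_alt)

lemma in_up_setoOo_long: "in_up q setoOo_long \<Longrightarrow> odd (length q) \<and> 9 \<le> length q \<and> hd q = last q"
  by (auto simp: in_up_def setoOo_long_def same_part_def hd_rev last_rev)

lemma in_up_setoox_iff: "in_up q setoox \<longleftrightarrow> same_part q [W, W, B] \<or> same_part q [W, W, B, W, W]"
  by (simp add: setoox_def in_up_insert)

lemma in_up_setX_iff: "in_up q setX \<longleftrightarrow> same_part q [B, B, W]"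
  by (simp add: setX_eq in_up_insert)

lemma ind_setO_eq:
  "ind setO q =
    (if q = alt W (length q) \<and> odd (length q) \<and> 5 \<le> length q \<and> length q \<noteq> 9 then 1 else 0)"
  by (simp add: ind_def in_up_setO_iff)

lemma ind_setoox_eq:
  "ind setoox q = (if same_part q [W, W, B] \<or> same_part q [W, W, B, W, W] then 1 else 0)"
  by (simp add: ind_def in_up_setoox_iff)

lemma ind_setX_eq: "ind setX q = (if same_part q [B, B, W] then 1 else 0)"
  by (simp add: ind_def in_up_setX_iff)

lemma ind_eq_0_length:
  "length q < 5 \<Longrightarrow> ind setO q = 0" "length q < 8 \<Longrightarrow> ind setA q = 0"
  "length q < 7 \<Longrightarrow> ind setoA q = 0" "length q < 9 \<Longrightarrow> ind setoOo_long q = 0"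
  "length q \<noteq> 3 \<Longrightarrow> ind setX q = 0"
  using in_up_setO_iff[of q] in_up_setA[of q] in_up_setoA[of q] in_up_setoOo_long[of q]
  by (auto simp: ind_def in_up_setX_iff same_part_def)

lemma ind_eq_0_even:
  assumes "even (length q)"
  shows "ind setO q = 0" "ind setoA q = 0" "ind setoOo_long q = 0" "ind setoox q = 0"
  using assms in_up_setO_iff[of q] in_up_setoA[of q] in_up_setoOo_long[of q]
  by (auto simp: ind_def in_up_setoox_iff same_part_def)

lemma ind_eq_0_same_ends:
  assumes "hd q = last q"
  shows "ind setA q = 0" "ind setoA q = 0"
  using assms in_up_setA[of q] in_up_setoA[of q] by (auto simp: ind_def)

text \<open>\<open>c\<close>, \<open>y\<close> and \<open>z\<close> refer to the count vector.\<close>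

definition cz_ind :: "part \<Rightarrow> nat" where
  "cz_ind q = ind setoOo_long q + ind setoox q + ind setoA q"

definition yz_ind :: "part \<Rightarrow> nat" where
  "yz_ind q = ind setA q + ind setoA q"

lemma cz_ind_le_1: "cz_ind q \<le> 1"
  using in_up_setoOo_long[of q] in_up_setoA[of q]
  by (auto simp: cz_ind_def ind_def in_up_setoox_iff same_part_def)

lemma yz_ind_le_1: "yz_ind q \<le> 1"
  using in_up_setA[of q] in_up_setoA[of q] by (auto simp: yz_ind_def ind_def)

lemma cz_ind_rev [simp]: "cz_ind (rev q) = cz_ind q"
  by (simp add: cz_ind_def)

lemma yz_ind_rev [simp]: "yz_ind (rev q) = yz_ind q"
  by (simp add: yz_ind_def)

definition admissible :: "part \<Rightarrow> bool" where
  "admissible q \<longleftrightarrow> same_part q [B] \<or> same_part q [B, B, W] \<or> (\<exists>n>0. same_part q (alt W n))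
     \<or> (\<exists>n. same_part q (W # alt W n)) \<or> (\<exists>n. odd n \<and> same_part q (W # alt W n @ [W]))"

text \<open>A decidable over-approximation of admissibility, so that the ASF rules can be checked by
  evaluation.\<close>

definition weakly_admissible :: "part \<Rightarrow> bool" where
  "weakly_admissible q \<longleftrightarrow> q \<noteq> [] \<and> (q = [B] \<or> same_part q [B, B, W] \<or> hd q = W \<or> last q = W)"

lemma admissible_same_part: "same_part p q \<Longrightarrow> admissible p \<longleftrightarrow> admissible q"
  unfolding admissible_def by (meson same_part_sym same_part_trans)

lemma admissible_rev [simp]: "admissible (rev p) \<longleftrightarrow> admissible p"
  using admissible_same_part[of "rev p" p] by simp

lemma admissible_altI: "0 < n \<Longrightarrow> admissible (alt W n)"
  unfolding admissible_def using same_part_refl by blast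

lemma admissible_W_altI: "admissible (W # alt W n)"
  unfolding admissible_def using same_part_refl by blast

lemma admissible_W_alt_WI: "odd n \<Longrightarrow> admissible (W # alt W n @ [W])"
  unfolding admissible_def using same_part_refl by blast

lemma admissible_short [simp]:
  "admissible [W]" "admissible [B]" "admissible [W, W]" "admissible [W, B]" "admissible [B, W]"
  "admissible [W, W, B]" "admissible [B, B, W]" "admissible [W, W, B, W]" "admissible [W, B, W, B]"
  "admissible [B, W, B, W]"
  using admissible_altI[of 1] admissible_altI[of 2] admissible_altI[of 4]
    admissible_W_altI[of 1] admissible_W_altI[of 2] admissible_W_altI[of 3]
    admissible_rev[of "[W, B]"] admissible_rev[of "[W, B, W, B]"]
  by (simp_all add: admissible_def)

lemma weakly_admissible_same_part: "same_part p q \<Longrightarrow> weakly_admissible q \<Longrightarrow> weakly_admissible p"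
  by (auto simp: weakly_admissible_def same_part_def hd_rev last_rev)

lemma admissible_weakly_admissible: "admissible q \<Longrightarrow> weakly_admissible q"
  unfolding admissible_def
  by (elim disjE exE conjE; erule weakly_admissible_same_part)
    (auto simp: weakly_admissible_def hd_alt)

section \<open>Right's moves inside a part\<close>

definition right_split :: "part \<Rightarrow> part \<Rightarrow> part \<Rightarrow> bool" where
  "right_split p x y \<longleftrightarrow> (\<exists>u v. p = u @ [B, W] @ v \<and> x = u @ [W] \<and> y = v) \<or>
                          (\<exists>u v. p = u @ [W, B] @ v \<and> x = u \<and> y = W # v)"

lemma right_move_right_split:
  assumes "right_move g h"
  obtains p x y where "p \<in># g" "right_split p x y"
    "h = g - {#p#} + filter_mset (\<lambda>q. q \<noteq> []) {#x, y#}"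
  using assms unfolding right_move_def right_split_def by blast

lemma right_split_rev:
  assumes "right_split (rev p) x y"
  shows "right_split p (rev y) (rev x)"
proof -
  from assms consider (BW) u v where "rev p = u @ [B, W] @ v" "x = u @ [W]" "y = v"
    | (WB) u v where "rev p = u @ [W, B] @ v" "x = u" "y = W # v"
    unfolding right_split_def by blast
  then show ?thesis
  proof cases
    case (BW u v)
    then show ?thesis
      unfolding right_split_def
      by (intro disjI2 exI[of _ "rev v"] exI[of _ "rev u"]) (simp add: rev_swap)
  next
    case (WB u v)
    then show ?thesis
      unfolding right_split_def
      by (intro disjI1 exI[of _ "rev v"] exI[of _ "rev u"]) (simp add: rev_swap)
  qed
qed

lemma right_split_Cons:
  assumes "right_split (c # p) x y" "p \<noteq> []" "hd p = c"
  shows "\<exists>x'. x = c # x' \<and> right_split p x' y"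
  using assms unfolding right_split_def by (cases p) (auto simp: Cons_eq_append_conv)

lemma right_split_snoc:
  assumes "right_split (p @ [c]) x y" "p \<noteq> []" "last p = c"
  shows "\<exists>y'. y = y' @ [c] \<and> right_split p x y'"
proof -
  have "right_split (c # rev p) (rev y) (rev x)"
    using right_split_rev[of "c # rev p" x y] assms(1) by simp
  then obtain y' where y': "rev y = c # y'" "right_split (rev p) y' (rev x)"
    using right_split_Cons assms(2,3) by (fastforce simp: hd_rev)
  have "y = rev y' @ [c]" "right_split p x (rev y')"
    using y' right_split_rev[of p y' "rev x"] by (auto simp: rev_swap)
  then show ?thesis by blast
qed

lemma right_split_alt:
  assumes "right_split (alt W n) x y"
  obtains (BW) i j where "odd i" "i + j + 2 = n" "x = alt W i @ [W]" "y = alt B j"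
    | (WB) i j where "even i" "i + j + 2 = n" "x = alt W i" "y = W # alt W j"
  using assms unfolding right_split_def
proof (elim disjE exE conjE)
  fix u v assume "alt W n = u @ [B, W] @ v" "x = u @ [W]" "y = v"
  with alt_split[OF this(1)] show thesis
    by (intro BW[of "length u" "n - length u - 2"]) (auto split: if_splits)
next
  fix u v assume "alt W n = u @ [W, B] @ v" "x = u" "y = W # v"
  with alt_split[OF this(1)] show thesis
    by (intro WB[of "length u" "n - length u - 2"]) (auto split: if_splits)
qed

lemma right_split_W_alt:
  assumes "right_split (W # alt W n) x y" "0 < n"
  obtains (BW) i j where "odd i" "i + j + 2 = n" "x = W # alt W i @ [W]" "y = alt B j"
    | (WB) i j where "even i" "i + j + 2 = n" "x = W # alt W i" "y = W # alt W j"
proof -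
  obtain x' where x: "x = W # x'" and split: "right_split (alt W n) x' y"
    using right_split_Cons[OF assms(1)] assms(2) by (auto simp: hd_alt)
  from split show thesis
    by (cases rule: right_split_alt) (use x BW WB in auto)
qed

lemma right_split_W_alt_W:
  assumes "right_split (W # alt W n @ [W]) x y" "odd n"
  obtains (BW) i j where "odd i" "i + j + 2 = n" "x = W # alt W i @ [W]" "y = alt B j @ [W]"
    | (WB) i j where "even i" "i + j + 2 = n" "x = W # alt W i" "y = W # alt W j @ [W]"
proof -
  have n: "alt W n \<noteq> []" "last (alt W n) = W"
    using assms(2) odd_pos by (auto simp: last_alt)
  obtain x' where x: "x = W # x'" and split: "right_split (alt W n @ [W]) x' y"
    using right_split_Cons[OF assms(1)] n(1) by (auto simp: hd_append hd_alt)
  obtain y' where y: "y = y' @ [W]" and split': "right_split (alt W n) x' y'"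
    using right_split_snoc[OF split n] by blast
  from split' show thesis
    by (cases rule: right_split_alt) (use x y BW WB in auto)
qed

lemma piece_W_alt_odd:
  assumes "odd m"
  shows "admissible (W # alt W m)" "cz_ind (W # alt W m) = 0" "yz_ind (W # alt W m) = 0"
proof -
  have "even (length (W # alt W m))" "hd (W # alt W m) = last (W # alt W m)"
    using assms by (auto simp: last_alt)
  then show "admissible (W # alt W m)" "cz_ind (W # alt W m) = 0" "yz_ind (W # alt W m) = 0"
    using admissible_W_altI ind_eq_0_even ind_eq_0_same_ends
    by (simp_all add: cz_ind_def yz_ind_def)
qed

lemma piece_alt_even:
  assumes "even m"
  shows "alt s m = [] \<or> admissible (alt s m)" "cz_ind (alt s m) = 0"
proof -
  have "admissible (alt s m)" if "0 < m"
  proof (cases s)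
    case B
    then have "alt s m = rev (alt W m)"
      using assms by (simp add: rev_alt_even)
    then show ?thesis using admissible_altI[OF that] by simp
  qed (use admissible_altI[OF that] in simp)
  then show "alt s m = [] \<or> admissible (alt s m)" by auto
  show "cz_ind (alt s m) = 0"
    using assms ind_eq_0_even by (simp add: cz_ind_def)
qed

lemma piece_W_alt_W:
  assumes "odd m"
  shows "admissible (W # alt W m @ [W])" "yz_ind (W # alt W m @ [W]) = 0"
  using assms admissible_W_alt_WI ind_eq_0_same_ends by (simp_all add: yz_ind_def)

definition good_split :: "part \<Rightarrow> part \<Rightarrow> part \<Rightarrow> bool" where
  "good_split p x y \<longleftrightarrow> (x = [] \<or> admissible x) \<and> (y = [] \<or> admissible y) \<and>
     yz_ind x + yz_ind y \<le> 1 \<and>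
     cz_ind x + cz_ind y + ind setO p \<le> 1 + ind setoOo_long p + ind setoox p"

text \<open>In \<open>S\<^sub>2\<close> there is no \<open>O\<close>-part to pay for a new \<open>c + z\<close>-part, but an \<open>xxo\<close> pays for
  one \<open>oox\<close>.\<close>

definition small_split :: "part \<Rightarrow> part \<Rightarrow> part \<Rightarrow> bool" where
  "small_split p x y \<longleftrightarrow> ind setoOo_long x + ind setoOo_long y = 0 \<and>
     ind setoA x + ind setoA y = 0 \<and> ind setoox x + ind setoox y + ind setX p \<le> 1"

lemma good_split_same_part: "same_part p q \<Longrightarrow> good_split p x y \<longleftrightarrow> good_split q x y"
  by (simp add: good_split_def ind_same_part)

lemma small_split_same_part: "same_part p q \<Longrightarrow> small_split p x y \<longleftrightarrow> small_split q x y"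
  by (simp add: small_split_def ind_same_part)

lemma good_split_swap_rev: "good_split p (rev y) (rev x) \<longleftrightarrow> good_split p x y"
  by (auto simp: good_split_def)

lemma small_split_swap_rev: "small_split p (rev y) (rev x) \<longleftrightarrow> small_split p x y"
  by (auto simp: small_split_def)

lemma good_split_alt:
  assumes "odd n" "right_split (alt W n) x y"
  shows "good_split (alt W n) x y"
  using assms(2)
proof (cases rule: right_split_alt)
  case (BW i j)
  then have x: "x = rev (W # alt W i)" and "even j"
    using assms(1) by (auto simp: rev_alt_odd)
  have "admissible x" "cz_ind x = 0" "yz_ind x = 0"
    using piece_W_alt_odd[OF \<open>odd i\<close>] by (simp_all only: x admissible_rev cz_ind_rev yz_ind_rev)
  moreover have "y = [] \<or> admissible y" "cz_ind y = 0"
    using BW piece_alt_even[OF \<open>even j\<close>, of B] by simp_all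
  ultimately show ?thesis
    using yz_ind_le_1[of y] ind_le_1[of setO "alt W n"] by (auto simp: good_split_def)
next
  case (WB i j)
  then have "odd j"
    using assms(1) by auto
  then have "x = [] \<or> admissible x" "cz_ind x = 0" "admissible y" "cz_ind y = 0" "yz_ind y = 0"
    using WB piece_alt_even[of i W] piece_W_alt_odd[of j] by simp_all
  then show ?thesis
    using yz_ind_le_1[of x] ind_le_1[of setO "alt W n"] by (auto simp: good_split_def)
qed

lemma good_split_W_alt:
  assumes "odd n" "right_split (W # alt W n) x y"
  shows "good_split (W # alt W n) x y"
proof -
  have no_O: "ind setO (W # alt W n) = 0"
    using assms(1) by (simp add: ind_eq_0_even)
  from assms(2) odd_pos[OF assms(1)] show ?thesis
  proof (cases rule: right_split_W_alt)
    case (BW i j)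
    then have "even j"
      using assms(1) by auto
    then have "admissible x" "yz_ind x = 0" "y = [] \<or> admissible y" "cz_ind y = 0"
      using BW piece_W_alt_W[of i] piece_alt_even[of j B] by simp_all
    then show ?thesis
      using no_O cz_ind_le_1[of x] yz_ind_le_1[of y] by (simp add: good_split_def)
  next
    case (WB i j)
    then have "odd j"
      using assms(1) by auto
    then have "admissible x" "admissible y" "cz_ind y = 0" "yz_ind y = 0"
      using WB admissible_W_altI[of i] piece_W_alt_odd[of j] by simp_all
    then show ?thesis
      using no_O cz_ind_le_1[of x] yz_ind_le_1[of x] by (simp add: good_split_def)
  qed
qed

lemma small_split_W_alt:
  assumes "odd n" "n \<le> 7" "right_split (W # alt W n) x y"
  shows "small_split (W # alt W n) x y"
proof -
  have no_X: "ind setX (W # alt W n) = 0"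
    using assms(1) by (intro ind_eq_0_length) auto
  from assms(3) odd_pos[OF assms(1)] show ?thesis
  proof (cases rule: right_split_W_alt)
    case (BW i j)
    then have "even j" "length x < 9" "hd x = last x"
      using assms(1,2) by auto
    then have "ind setoOo_long x = 0" "ind setoA x = 0" "cz_ind y = 0"
      using BW piece_alt_even[of j B] ind_eq_0_length(4) ind_eq_0_same_ends(2) by simp_all
    then show ?thesis
      using no_X ind_le_1[of setoox x] by (simp add: small_split_def cz_ind_def)
  next
    case (WB i j)
    then have "odd j" "length x < 7"
      using assms(1,2) by auto
    then have "ind setoOo_long x = 0" "ind setoA x = 0" "cz_ind y = 0"
      using WB piece_W_alt_odd[of j] ind_eq_0_length(3,4) by simp_all
    then show ?thesis
      using no_X ind_le_1[of setoox x] by (simp add: small_split_def cz_ind_def)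
  qed
qed

lemma good_split_W_alt_W:
  assumes "odd n" "7 \<le> n" "right_split (W # alt W n @ [W]) x y"
  shows "good_split (W # alt W n @ [W]) x y"
proof -
  have long: "ind setoOo_long (W # alt W n @ [W]) = 1"
    using assms(1,2) by (auto simp: ind_def setoOo_long_def intro!: in_upI)
  have no_O: "ind setO (W # alt W n @ [W]) = 0"
    using assms(2) by (cases n) (simp_all add: ind_def in_up_setO_iff)
  from assms(3,1) show ?thesis
  proof (cases rule: right_split_W_alt_W)
    case (BW i j)
    then have "even j"
      using assms(1) by auto
    with BW have y: "y = rev (W # alt W j)"
      by (simp add: rev_alt_even)
    have "admissible y"
      using admissible_W_altI[of j] by (simp only: y admissible_rev)
    moreover have "admissible x" "yz_ind x = 0"
      using BW piece_W_alt_W[of i] by simp_all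
    ultimately show ?thesis
      using long no_O yz_ind_le_1[of y] cz_ind_le_1[of x] cz_ind_le_1[of y]
      by (simp add: good_split_def)
  next
    case (WB i j)
    then have "odd j"
      using assms(1) by auto
    then have "admissible x" "admissible y" "yz_ind y = 0"
      using WB admissible_W_altI[of i] piece_W_alt_W[of j] by simp_all
    then show ?thesis
      using long no_O yz_ind_le_1[of x] cz_ind_le_1[of x] cz_ind_le_1[of y]
      by (simp add: good_split_def)
  qed
qed

lemma right_split_short:
  "right_split [W, B] x y \<Longrightarrow> x = [] \<and> y = [W]"
  "right_split [W, B, W, B] x y \<Longrightarrow>
     x = [W, W] \<and> y = [B] \<or> x = [] \<and> y = [W, W, B] \<or> x = [W, B] \<and> y = [W]"
  "right_split [W, W, B] x y \<Longrightarrow> x = [W] \<and> y = [W]"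
  "right_split [B, B, W] x y \<Longrightarrow> x = [B, W] \<and> y = []"
  by (auto simp: right_split_def append_eq_Cons_conv Cons_eq_append_conv)

lemma good_small_split_short:
  assumes "p \<in> {[W, B], [W, B, W, B], [W, W, B], [B, B, W]}" "right_split p x y"
  shows "good_split p x y \<and> small_split p x y"
proof -
  from assms(1) consider "p = [W, B]" | "p = [W, B, W, B]" | "p = [W, W, B]" | "p = [B, B, W]"
    by blast
  then show ?thesis
    using assms(2)
    by cases (auto dest!: right_split_short simp: good_split_def small_split_def cz_ind_def
        yz_ind_def ind_eq_0_length ind_setoox_eq ind_setX_eq same_part_def)
qed

lemma good_split_setO_setoO_setoOo:
  assumes "q \<in> setO \<union> setoO \<union> setoOo" "right_split q x y"
  shows "good_split q x y"
proof -
  from assms(1) consider n where "odd n" "q = alt W n" | n where "odd n" "q = W # alt W n"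
    | "q = [W, W, B]" | n where "odd n" "7 \<le> n" "q = W # alt W n @ [W]"
    unfolding setO_eq setoO_eq setoOo_eq setoOo_long_def by blast
  then show ?thesis
    by cases (use assms(2) good_split_alt good_split_W_alt good_split_W_alt_W
        good_small_split_short in auto)
qed

lemma good_small_split_setI_setF_setX:
  assumes "q \<in> setI \<union> setF \<union> setX" "right_split q x y"
  shows "good_split q x y \<and> small_split q x y"
proof -
  from assms(1) consider "q \<in> {[W, B], [W, B, W, B], [B, B, W]}" | "q = W # alt W 5"
    | "q = W # alt W 7"
    unfolding setI_eq setF_eq setX_eq by blast
  then show ?thesis
  proof cases
    case 1
    then show ?thesis using assms(2) good_small_split_short by blast
  next
    case 2
    then show ?thesis using assms(2) good_split_W_alt[of 5] small_split_W_alt[of 5] by simp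
  next
    case 3
    then show ?thesis using assms(2) good_split_W_alt[of 7] small_split_W_alt[of 7] by simp
  qed
qed

lemma good_split_setK:
  assumes "q \<in> setK" "q \<notin> setA" "q \<notin> setoA" "right_split q x y"
  shows "good_split q x y \<and> (q \<notin> setO \<and> q \<notin> setoO \<and> q \<notin> setoOo \<longrightarrow> small_split q x y)"
proof -
  from assms(1-3) have "q \<in> setO \<union> setoO \<union> setoOo \<or> q \<in> setI \<union> setF \<union> setX"
    unfolding setK_def Un_iff by blast
  then show ?thesis
  proof
    assume "q \<in> setO \<union> setoO \<union> setoOo"
    then show ?thesis using good_split_setO_setoO_setoOo[OF _ assms(4)] by blast
  next
    assume "q \<in> setI \<union> setF \<union> setX"
    then show ?thesis using good_small_split_setI_setF_setX[OF _ assms(4)] by blast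
  qed
qed

lemma good_split_in_up_setK:
  assumes "in_up p setK" "\<not> in_up p setA" "\<not> in_up p setoA" "right_split p x y"
  shows "good_split p x y \<and>
    (\<not> in_up p setO \<and> \<not> in_up p setoO \<and> \<not> in_up p setoOo \<longrightarrow> small_split p x y)"
proof -
  obtain q where q: "q \<in> setK" "same_part p q"
    using assms(1) by (auto simp: in_up_def)
  have in_up_p: "in_up p A" if "q \<in> A" for A
    using that q(2) by (rule in_upI)
  have "q \<notin> setA" "q \<notin> setoA"
    using assms(2,3) in_up_p by blast+
  note q_split = good_split_setK[OF q(1) this]
  have "right_split q x y \<or> right_split q (rev y) (rev x)"
    using q(2) assms(4) right_split_rev by (auto simp: same_part_def)
  then have "good_split q x y \<and> (q \<notin> setO \<and> q \<notin> setoO \<and> q \<notin> setoOo \<longrightarrow> small_split q x y)"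
    using q_split good_split_swap_rev small_split_swap_rev by blast
  then show ?thesis
    using in_up_p good_split_same_part[OF q(2)] small_split_same_part[OF q(2)] by blast
qed

section \<open>ASF preserves the invariant\<close>

text \<open>Rule \<open>\<beta>\<close> cancels \<open>oox\<close> against \<open>xxo\<close>, so in standard form they do not coexist; until then,
  \<open>oox\<close>-like parts are only charged beyond the number of \<open>xxo\<close> parts (truncated subtraction).\<close>

definition asf_inv :: "game \<Rightarrow> bool" where
  "asf_inv s \<longleftrightarrow> (\<forall>p\<in>#s. admissible p) \<and> cnt setA s + cnt setoA s \<le> 1 \<and>
     cnt setoOo_long s + (cnt setoox s - cnt setX s) + cnt setoA s \<le> cnt setO s"

text \<open>Lengths are squared so that \<open>\<epsilon>\<close> and \<open>\<eta>\<close>, which do not shorten the game, still decrease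
  the weight; the summand \<open>1\<close> makes cancelling two empty parts decrease it.\<close>

definition part_weight :: "part \<Rightarrow> nat" where
  "part_weight p = length p * length p + 1"

definition game_weight :: "game \<Rightarrow> nat" where
  "game_weight s = (\<Sum>p\<in>#s. part_weight p)"

lemma game_weight_union [simp]: "game_weight (s + t) = game_weight s + game_weight t"
  by (simp add: game_weight_def)

lemma game_weight_remove: "p \<in># s \<Longrightarrow> game_weight s = game_weight (s - {#p#}) + part_weight p"
  by (metis add.commute game_weight_def image_mset_add_mset insert_DiffM sum_mset.insert)

lemma game_weight_mset: "game_weight (mset r) = sum_list (map part_weight r)"
  by (induction r) (auto simp: game_weight_def)

text \<open>A rule whose left side is not weakly admissible never fires on a game satisfying the
  invariant.\<close>

definition sound_repl :: "part \<Rightarrow> part list \<Rightarrow> bool" where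
  "sound_repl l r \<longleftrightarrow> sum_list (map part_weight r) < part_weight l \<and>
     (weakly_admissible l \<longrightarrow> ind setO l = 0 \<and> ind setX l = 0 \<and>
        (\<forall>q\<in>set r. admissible q \<and> length q \<le> 4) \<and> sum_list (map (ind setoox) r) \<le> ind setoox l)"

lemma asf_rules_sound:
  "\<rho> \<in> set asf_rules \<Longrightarrow> \<rho> = Cancel \<or> (\<exists>rs. \<rho> = Repl rs \<and> (\<forall>(l, r)\<in>set rs. sound_repl l r))"
  unfolding asf_rules_def rule_alpha_def rule_gamma_def rule_delta_def rule_eps_def
    rule_zeta_def rule_eta_def
  by (auto simp: sound_repl_def wd_def negp_def part_weight_def weakly_admissible_def
      same_part_def ind_setO_eq ind_setX_eq ind_setoox_eq)

lemma cnt_mset_eq_0: "(\<And>q. q \<in> set r \<Longrightarrow> ind A q = 0) \<Longrightarrow> cnt A (mset r) = 0"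
  by (simp add: cnt_mset sum_list_eq_0_iff)

lemma rule_res_Repl_weight:
  assumes "\<forall>(l, r)\<in>set rs. sound_repl l r" "rule_res (Repl rs) s s'"
  shows "game_weight s' < game_weight s"
proof -
  from assms(2) obtain l r p where lr: "(l, r) \<in> set rs" and p: "p \<in># s" "same_part p l"
    and s': "s' = s - {#p#} + mset r"
    by auto
  have "sum_list (map part_weight r) < part_weight p"
    using assms(1) lr same_part_length[OF p(2)] by (auto simp: sound_repl_def part_weight_def)
  then show ?thesis
    using game_weight_remove[OF p(1)] unfolding s' game_weight_union game_weight_mset by linarith
qed

lemma rule_res_Repl_inv:
  assumes sound: "\<forall>(l, r)\<in>set rs. sound_repl l r" and res: "rule_res (Repl rs) s s'"
    and inv: "asf_inv s"
  shows "asf_inv s'"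
proof -
  from res obtain l r p where lr: "(l, r) \<in> set rs" and p: "p \<in># s" "same_part p l"
    and s': "s' = s - {#p#} + mset r"
    by auto
  have "admissible p"
    using inv p(1) by (auto simp: asf_inv_def)
  then have "weakly_admissible l"
    using admissible_same_part[OF p(2)] admissible_weakly_admissible by blast
  then have l: "ind setO l = 0" "ind setX l = 0" "\<forall>q\<in>set r. admissible q \<and> length q \<le> 4"
      "cnt setoox (mset r) \<le> ind setoox l"
    using sound lr by (auto simp: sound_repl_def cnt_mset)
  have r: "cnt setA (mset r) = 0" "cnt setoA (mset r) = 0" "cnt setoOo_long (mset r) = 0"
    using l(3) by (auto intro!: cnt_mset_eq_0 simp: ind_eq_0_length)
  have s: "cnt A s = cnt A (s - {#p#}) + ind A l" for A
    using cnt_remove[OF p(1)] ind_same_part[OF p(2)] by simp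
  have "\<forall>q\<in>#s'. admissible q"
    using inv l(3) by (auto simp: asf_inv_def s' dest: in_diffD)
  moreover have "cnt setA s' + cnt setoA s' \<le> 1"
    using inv s[of setA] s[of setoA] r by (simp add: asf_inv_def s')
  moreover have "cnt setoOo_long s' + (cnt setoox s' - cnt setX s') + cnt setoA s' \<le> cnt setO s'"
    using inv l r s[of setoOo_long] s[of setoox] s[of setX] s[of setoA] s[of setO]
    unfolding asf_inv_def s' cnt_union by linarith
  ultimately show ?thesis
    by (simp add: asf_inv_def)
qed

lemma cancel_not_setO:
  assumes "admissible q" "same_part q (negp p)"
  shows "\<not> in_up p setO"
proof
  assume "in_up p setO"
  then have p: "p = alt W (length p)" "odd (length p)" "5 \<le> length p"
    by (auto simp: in_up_setO_iff)
  then have "q = alt B (length p)"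
    using assms(2) negp_alt[of W "length p"] by (auto simp: same_part_def rev_alt_odd)
  then have "hd q = B" "last q = B" "5 \<le> length q"
    using p odd_pos[OF p(2)] by (auto simp: hd_alt last_alt)
  then show False
    using admissible_weakly_admissible[OF assms(1)]
    by (auto simp: weakly_admissible_def same_part_def)
qed

lemma cancel_setX:
  assumes "same_part q (negp p)" "in_up p setX"
  shows "in_up q setoox"
proof -
  have "same_part (negp p) [W, W, B]"
    using same_part_negp[of p "[B, B, W]"] assms(2) by (simp add: in_up_setX_iff negp_def)
  then show ?thesis
    using assms(1) same_part_trans in_up_setoox_iff by blast
qed

lemma rule_res_Cancel_weight:
  assumes "rule_res Cancel s s'"
  shows "game_weight s' < game_weight s"
proof -
  from assms obtain p q where p: "p \<in># s" and q: "q \<in># s - {#p#}" and s': "s' = s - {#p, q#}"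
    by auto
  show ?thesis
    using game_weight_remove[OF p] game_weight_remove[OF q]
    by (simp add: s' part_weight_def add_mset_commute diff_diff_add_mset)
qed

lemma rule_res_Cancel_inv:
  assumes "rule_res Cancel s s'" and inv: "asf_inv s"
  shows "asf_inv s'"
proof -
  from assms obtain p q where p: "p \<in># s" and q: "q \<in># s - {#p#}"
    and pq: "same_part q (negp p)" and s': "s' = s - {#p, q#}"
    by auto
  have s: "cnt A s = cnt A s' + ind A p + ind A q" for A
    using cnt_remove[OF p, of A] cnt_remove[OF q, of A] by (simp add: s' add_mset_commute)
  have "admissible p" "admissible q"
    using inv p q by (auto simp: asf_inv_def dest: in_diffD)
  moreover have qp: "same_part p (negp q)"
    using pq by (rule same_part_negp_sym)
  ultimately have "ind setO p = 0" "ind setO q = 0" "ind setX p \<le> ind setoox q"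
    "ind setX q \<le> ind setoox p"
    using cancel_not_setO[OF _ pq] cancel_not_setO[OF _ qp] cancel_setX[OF pq] cancel_setX[OF qp]
    by (auto simp: ind_def)
  moreover have "\<forall>r\<in>#s'. admissible r"
    using inv by (auto simp: asf_inv_def s' dest: in_diffD)
  ultimately show ?thesis
    using inv s[of setA] s[of setoA] s[of setoOo_long] s[of setoox] s[of setX] s[of setO]
    unfolding asf_inv_def by linarith
qed

lemma asf_rule_res:
  assumes "\<rho> \<in> set asf_rules" "rule_res \<rho> s s'"
  shows "game_weight s' < game_weight s" and "asf_inv s \<Longrightarrow> asf_inv s'"
proof -
  from asf_rules_sound[OF assms(1)]
  have "game_weight s' < game_weight s \<and> (asf_inv s \<longrightarrow> asf_inv s')"
  proof
    assume "\<rho> = Cancel"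
    then show ?thesis
      using assms(2) rule_res_Cancel_weight rule_res_Cancel_inv by simp
  next
    assume "\<exists>rs. \<rho> = Repl rs \<and> (\<forall>(l, r)\<in>set rs. sound_repl l r)"
    then show ?thesis
      using assms(2) rule_res_Repl_weight rule_res_Repl_inv by auto
  qed
  then show "game_weight s' < game_weight s" and "asf_inv s \<Longrightarrow> asf_inv s'"
    by simp_all
qed

lemma asf_step_weight: "asf_step s s' \<Longrightarrow> game_weight s' < game_weight s"
  by (auto simp: asf_step_def intro: asf_rule_res(1)[OF nth_mem])

lemma asf_step_inv: "asf_step s s' \<Longrightarrow> asf_inv s \<Longrightarrow> asf_inv s'"
  by (auto simp: asf_step_def intro: asf_rule_res(2)[OF nth_mem])

lemma rtranclp_asf_step_inv: "asf_step\<^sup>*\<^sup>* s s' \<Longrightarrow> asf_inv s \<Longrightarrow> asf_inv s'"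
  by (induction rule: rtranclp_induct) (auto dest: asf_step_inv)

lemma ASF_exists: "\<exists>s'. ASF s s'"
proof (induction s rule: measure_induct_rule[of game_weight])
  case (less s)
  show ?case
  proof (cases "standard_form s")
    case True
    then show ?thesis by (auto simp: ASF_def)
  next
    case False
    then have "\<exists>i. i < length asf_rules \<and> applicable (asf_rules ! i) s"
      by (auto simp: standard_form_def in_set_conv_nth)
    then obtain i where i: "i < length asf_rules" "applicable (asf_rules ! i) s"
      and first: "\<forall>j<i. \<not> (j < length asf_rules \<and> applicable (asf_rules ! j) s)"
      using exists_least_iff[of "\<lambda>i. i < length asf_rules \<and> applicable (asf_rules ! i) s"] by blast
    then obtain s1 where "rule_res (asf_rules ! i) s s1"
      by (auto simp: applicable_def)
    with i first have step: "asf_step s s1"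
      by (auto simp: asf_step_def)
    then obtain s' where "asf_step\<^sup>*\<^sup>* s1 s'" "standard_form s'"
      using less asf_step_weight unfolding ASF_def by blast
    with step show ?thesis
      unfolding ASF_def by (blast intro: converse_rtranclp_into_rtranclp)
  qed
qed

section \<open>Games in standard form\<close>

fun rule_lhs :: "rule \<Rightarrow> part set" where
  "rule_lhs (Repl rs) = fst ` set rs"
| "rule_lhs Cancel = {}"

definition admissible_redexes :: "part set" where
  "admissible_redexes = {[W], [W, W], [W, W, W], [W, B, W, B, W, B], [B], [W, B, W],
    [W, W, B, W, B], [W, W, B, W, B, W, W], [W, B, W, B, W, B, W, B, W],
    [W, B, W, B, W, B, W, B, W, B, W, B], [W, W, B, W, W], [W, W, B, W]}"

lemma admissible_redexes_subset: "admissible_redexes \<subseteq> (\<Union>\<rho>\<in>set asf_rules. rule_lhs \<rho>)"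
  unfolding admissible_redexes_def asf_rules_def rule_alpha_def rule_gamma_def rule_delta_def
    rule_eps_def rule_zeta_def rule_eta_def
  by (simp add: wd_def negp_def)

lemma standard_form_no_admissible_redex:
  assumes "standard_form s" "p \<in># s" "l \<in> admissible_redexes"
  shows "\<not> same_part p l"
proof
  assume same: "same_part p l"
  obtain \<rho> where \<rho>: "\<rho> \<in> set asf_rules" "l \<in> rule_lhs \<rho>"
    using admissible_redexes_subset assms(3) by blast
  obtain rs r where "\<rho> = Repl rs" "(l, r) \<in> set rs"
    using \<rho>(2) by (cases \<rho>) auto
  then have "rule_res \<rho> s (s - {#p#} + mset r)"
    using assms(2) same by auto
  then show False
    using assms(1) \<rho>(1) by (auto simp: standard_form_def applicable_def)
qed

lemma alt_in_setK:
  assumes "0 < n" "n \<notin> {1, 3, 6, 9, 12}"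
  shows "alt W n \<in> setK"
proof -
  have "n = 2 \<or> n = 4 \<or> (even n \<and> 8 \<le> n \<and> n \<noteq> 12) \<or> (odd n \<and> 5 \<le> n \<and> n \<noteq> 9)"
    using assms by auto
  then show ?thesis
    unfolding setK_def setI_eq setA_eq setO_eq by auto
qed

lemma W_alt_in_setK:
  assumes "n \<notin> {0, 1, 3, 4}"
  shows "W # alt W n \<in> setK"
proof -
  have "n = 2 \<or> n = 5 \<or> n = 7 \<or> (odd n \<and> 9 \<le> n) \<or> (even n \<and> 6 \<le> n)"
    using assms by auto presburger
  then show ?thesis
    unfolding setK_def setoOo_eq setI_eq setF_eq setoO_eq setoA_eq by auto
qed

lemma W_alt_W_in_setK:
  assumes "odd n" "n \<notin> {1, 3, 5}"
  shows "W # alt W n @ [W] \<in> setK"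
proof -
  have "7 \<le> n"
    using assms by auto presburger
  then show ?thesis
    using assms(1) unfolding setK_def setoOo_eq setoOo_long_def by auto
qed

lemma standard_admissible_in_up_setK:
  assumes std: "standard_form s" and p: "p \<in># s" "admissible p"
  shows "in_up p setK"
proof -
  have reduced: "l \<in> admissible_redexes \<Longrightarrow> \<not> same_part p l" for l
    using standard_form_no_admissible_redex[OF std p(1)] .
  from p(2) consider "same_part p [B]" | "same_part p [B, B, W]"
    | n where "0 < n" "same_part p (alt W n)" | n where "same_part p (W # alt W n)"
    | n where "odd n" "same_part p (W # alt W n @ [W])"
    unfolding admissible_def by blast
  then show ?thesis
  proof cases
    case 1
    then show ?thesis using reduced by (simp add: admissible_redexes_def)
  next
    case 2
    then show ?thesis by (auto simp: setK_def setX_eq intro: in_upI)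
  next
    case (3 n)
    then show ?thesis
      using reduced[of "alt W n"] alt_in_setK[of n] in_upI
      by (cases "n \<in> {1, 3, 6, 9, 12}") (auto simp: admissible_redexes_def)
  next
    case (4 n)
    then show ?thesis
      using reduced[of "W # alt W n"] W_alt_in_setK[of n] in_upI
      by (cases "n \<in> {0, 1, 3, 4}") (auto simp: admissible_redexes_def)
  next
    case (5 n)
    then show ?thesis
      using reduced[of "W # alt W n @ [W]"] W_alt_W_in_setK[of n] in_upI
      by (cases "n \<in> {1, 3, 5}") (auto simp: admissible_redexes_def)
  qed
qed

lemma cnt_setoOo_standard:
  assumes "standard_form s"
  shows "cnt setoOo s = cnt setoox s + cnt setoOo_long s"
proof (rule cnt_split)
  fix p
  assume "p \<in># s"
  then have "\<not> same_part p [W, W, B, W, W]"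
    using standard_form_no_admissible_redex[OF assms] by (simp add: admissible_redexes_def)
  then show "ind setoOo p = ind setoox p + ind setoOo_long p"
    using in_up_setoOo_long[of p] same_part_length[of p "[W, W, B]"]
    by (auto simp: ind_def setoOo_eq in_up_insert in_up_setoox_iff)
qed

lemma standard_form_not_both_setX_setoox:
  assumes "standard_form s"
  shows "cnt setX s = 0 \<or> cnt setoox s = 0"
proof (rule ccontr)
  assume "\<not> ?thesis"
  then obtain p q where p: "p \<in># s" "same_part p [B, B, W]" and q: "q \<in># s" "in_up q setoox"
    using cnt_gt_0_ex by (metis in_up_setX_iff neq0_conv)
  have "\<not> same_part q [W, W, B, W, W]"
    using standard_form_no_admissible_redex[OF assms q(1)] by (simp add: admissible_redexes_def)
  then have "same_part q [W, W, B]"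
    using q(2) by (simp add: in_up_setoox_iff)
  moreover have "same_part (negp p) [W, W, B]"
    using same_part_negp[OF p(2)] by (simp add: negp_def)
  ultimately have "same_part q (negp p)"
    by (meson same_part_sym same_part_trans)
  moreover have "q \<in># s - {#p#}"
    using p q \<open>same_part q [W, W, B]\<close> by (auto simp: same_part_def in_diff_count)
  ultimately have "applicable Cancel s"
    using p(1) unfolding applicable_def by fastforce
  then show False
    using assms by (simp add: standard_form_def asf_rules_def)
qed

lemma asf_inv_standard_S0:
  assumes "standard_form s" "asf_inv s"
  shows "s \<in> S0"
proof -
  have "dom_K s"
    using assms standard_admissible_in_up_setK by (auto simp: dom_K_def asf_inv_def)
  moreover have "cnt setA s + cnt setoA s \<le> 1"
    "cnt setoOo_long s + cnt setoox s + cnt setoA s \<le> cnt setO s"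
    using assms(2) standard_form_not_both_setX_setoox[OF assms(1)] by (auto simp: asf_inv_def)
  ultimately show ?thesis
    using cnt_setoOo_standard[OF assms(1)] by (auto simp: S0_def)
qed

section \<open>Right's move from \<open>S\<^sub>1 \<union> S\<^sub>2\<close>\<close>

lemma setK_admissible: "q \<in> setK \<Longrightarrow> admissible q"
  unfolding setK_def setO_eq setoO_eq setoOo_eq setoOo_long_def setI_eq setX_eq setF_eq setA_eq
    setoA_eq
  by (auto simp del: alt.simps alt_numeral
      intro: admissible_altI admissible_W_altI admissible_W_alt_WI)

lemma in_up_setK_admissible: "in_up p setK \<Longrightarrow> admissible p"
  using setK_admissible admissible_same_part by (auto simp: in_up_def)

lemma not_in_up_Nil:
  "\<not> in_up [] setO" "\<not> in_up [] setA" "\<not> in_up [] setoA" "\<not> in_up [] setoOo_long"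
  "\<not> in_up [] setoox" "\<not> in_up [] setX"
  using ind_eq_0_length[of "[]"]
  by (auto simp: ind_def in_up_setoox_iff in_up_setX_iff same_part_def)

lemma cnt_replace_by_pieces:
  assumes "p \<in># g" "\<not> in_up [] A"
  shows "cnt A (g - {#p#} + filter_mset (\<lambda>q. q \<noteq> []) {#x, y#}) + ind A p
    = cnt A g + ind A x + ind A y"
  using cnt_remove[OF assms(1), of A] assms(2)
  by (cases "x = []"; cases "y = []") (auto simp: ind_def)

lemma asf_inv_right_move:
  assumes g: "g \<in> S1 \<union> S2" and move: "right_move g h"
  shows "asf_inv h"
proof -
  obtain p x y where p: "p \<in># g" and split: "right_split p x y"
    and h: "h = g - {#p#} + filter_mset (\<lambda>q. q \<noteq> []) {#x, y#}"
    using right_move_right_split[OF move] by blast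
  have std: "standard_form g" and K: "\<forall>q\<in>#g. in_up q setK"
    and A: "cnt setA g = 0" and oA: "cnt setoA g = 0"
    using g by (auto simp: S1_def S2_def dom_K_def)
  note counts = not_in_up_Nil[THEN cnt_replace_by_pieces[OF p], of x y, folded h]
  have "\<not> in_up p setA" "\<not> in_up p setoA"
    using cnt_eq_0D[OF A p] cnt_eq_0D[OF oA p] .
  with K p split have good: "good_split p x y"
    and small: "\<not> in_up p setO \<and> \<not> in_up p setoO \<and> \<not> in_up p setoOo \<longrightarrow> small_split p x y"
    using good_split_in_up_setK by blast+
  have "\<forall>q\<in>#h. admissible q"
    using K good by (auto simp: h good_split_def in_up_setK_admissible dest: in_diffD)
  moreover have "cnt setA h + cnt setoA h \<le> 1"
    using good counts A oA by (simp add: good_split_def yz_ind_def)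
  moreover have "cnt setoOo_long h + (cnt setoox h - cnt setX h) + cnt setoA h \<le> cnt setO h"
    using g
  proof
    assume "g \<in> S1"
    then have "cnt setoox g + cnt setoOo_long g + 1 \<le> cnt setO g"
      using cnt_setoOo_standard[OF std] by (simp add: S1_def)
    then show ?thesis
      using good counts oA unfolding good_split_def cz_ind_def by linarith
  next
    assume "g \<in> S2"
    then have S2: "cnt setO g = 0" "cnt setoO g = 0" "cnt setoOo g = 0" "1 \<le> cnt setX g"
      by (auto simp: S2_def)
    then have "cnt setoox g = 0" "cnt setoOo_long g = 0"
      using cnt_setoOo_standard[OF std] by simp_all
    moreover have "small_split p x y"
      using small cnt_eq_0D[OF S2(1) p] cnt_eq_0D[OF S2(2) p] cnt_eq_0D[OF S2(3) p] by blast
    ultimately show ?thesis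
      using S2(4) counts oA unfolding small_split_def by linarith
  qed
  ultimately show ?thesis
    by (simp add: asf_inv_def)
qed

theorem theorem3:
  assumes "g \<in> S1 \<union> S2"
    and "right_move g h"
  shows "(\<exists>g'. ASF h g') \<and> (\<forall>g'. ASF h g' \<longrightarrow> g' \<in> S0)"
proof
  show "\<exists>g'. ASF h g'"
    by (rule ASF_exists)
  show "\<forall>g'. ASF h g' \<longrightarrow> g' \<in> S0"
    using asf_inv_right_move[OF assms] rtranclp_asf_step_inv asf_inv_standard_S0
    by (auto simp: ASF_def)
qed

end
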